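(* There is an absolute constant $c_0>0$ such that the following holds. Let $d\in\mathbb N_+$ and $0<\varepsilon\le c_0$. Let $Y=X+Z$ where $X\sim\mathrm{Bin}(d-1,1/2)$ and $Z\sim\mathrm{DLap}(1/\varepsilon)$ are independent. Then $$\Pr\left[Y=\left\lceil\frac{d-1}2\right\rceil\right]\ \ge\ \Omega\left(\frac1{\sqrt{d+1/\varepsilon^2}}\right),$$ with an absolute hidden constant.
   Context: $\mathrm{DLap}(1/\varepsilon)$ denotes the discrete Laplace distribution on $\mathbb Z$ with probability mass $\frac{e^\varepsilon-1}{e^\varepsilon+1}e^{-\varepsilon|x|}$ at $x\in\mathbb Z$. *)

theory Defs
  imports "HOL-Probability.Probability"
begin

text \<open>Probability mass of the discrete Laplace distribution DLap(1/eps) at an integer z.\<close>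
definition dlap :: "real \<Rightarrow> int \<Rightarrow> real" where
  "dlap eps z = (exp eps - 1) / (exp eps + 1) * exp (- eps * real_of_int \<bar>z\<bar>)"

text \<open>Pr[X + Z = y] for independent X ~ Bin(n, 1/2) and Z ~ DLap(1/eps):
  the convolution of the two probability mass functions.\<close>
definition binlap_prob :: "nat \<Rightarrow> real \<Rightarrow> int \<Rightarrow> real" where
  "binlap_prob n eps y =
     (\<Sum>k\<le>n. pmf (binomial_pmf n (1/2)) k * dlap eps (y - int k))"

end

theory Submission
  imports Defs
begin

(* Let n = d - 1 and m = ceil(n/2). The event Y = m contains the disjoint events X = m + j, Z = -j
   for 0 <= j <= J, where J = floor(min(sqrt d / 8, 1/eps)). On this window the binomial mass stays
   within a factor 7/8 of its maximum C(n,m)/2^n >= 1/(2 sqrt d), since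
   C(n,m+j) >= C(n,m)(1 - j(j+1)/m) and 64 j^2 <= d, while the Laplace mass is at least eps/12
   since eps j <= 1. Hence Pr[Y = m] >= (7/192)(J+1) eps / sqrt d, and because
   J + 1 >= min(sqrt d / 8, 1/eps) this is at least (7/192) min(eps, 1/sqrt d) / 8, where
   min(eps, 1/sqrt d) >= 1/sqrt(d + 1/eps^2). *)

lemma binomial_Suc_times_Suc: "(n choose Suc k) * Suc k = (n choose k) * (n - k)"
proof (cases n)
  case (Suc n')
  then show ?thesis
    using Suc_times_binomial[of k n'] binomial_absorb_comp[of n k] by (simp add: mult.commute)
qed simp

lemma binomial_Suc_ge:
  assumes "1 \<le> m" "2 * m \<le> n + 1"
  shows "real (n choose (m + j)) * (1 - (2 * real j + 2) / real m) \<le> real (n choose Suc (m + j))"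
proof -
  have "(1 - (2 * real j + 2) / real m) * real (Suc (m + j)) \<le> real (m + j + 1) - (2 * real j + 2)"
  proof -
    have "(2 * real j + 2) * real m \<le> (2 * real j + 2) * real (Suc (m + j))"
      by (intro mult_left_mono) auto
    then show ?thesis using assms(1) by (simp add: field_simps)
  qed
  also have "\<dots> \<le> real (n - (m + j))" using assms(2) by linarith
  finally have "real (n choose (m + j)) * ((1 - (2 * real j + 2) / real m) * real (Suc (m + j)))
      \<le> real (n choose (m + j)) * real (n - (m + j))"
    by (intro mult_left_mono) auto
  also have "\<dots> = real (n choose Suc (m + j)) * real (Suc (m + j))"
    by (metis binomial_Suc_times_Suc of_nat_mult)
  finally show ?thesis by (simp del: of_nat_Suc)
qed

lemma binomial_ge_near_middle:
  assumes "1 \<le> m" "2 * m \<le> n + 1"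
  shows "real (n choose m) * (1 - real j * (real j + 1) / real m) \<le> real (n choose (m + j))"
proof (induction j)
  case (Suc j)
  define A where "A = real j * (real j + 1) / real m"
  define B where "B = (2 * real j + 2) / real m"
  have A_plus_B: "A + B = real (Suc j) * (real (Suc j) + 1) / real m"
    unfolding A_def B_def using assms(1) by (simp add: field_simps)
  show ?case
  proof (cases "A + B \<le> 1")
    case True
    have "0 \<le> A" "0 \<le> B" unfolding A_def B_def by auto
    with True have "B \<le> 1" by linarith
    then have "1 - (A + B) \<le> (1 - A) * (1 - B)"
      by (simp add: algebra_simps \<open>0 \<le> A\<close> \<open>0 \<le> B\<close>)
    then have "real (n choose m) * (1 - (A + B)) \<le> real (n choose m) * (1 - A) * (1 - B)"
      by (simp add: mult_left_mono mult.assoc)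
    also have "\<dots> \<le> real (n choose (m + j)) * (1 - B)"
      using Suc.IH \<open>B \<le> 1\<close> by (intro mult_right_mono) (simp_all add: A_def)
    also have "\<dots> \<le> real (n choose (m + Suc j))"
      using binomial_Suc_ge[OF assms, of j] by (simp add: B_def)
    finally show ?thesis by (simp add: A_plus_B)
  next
    case False
    then have "real (n choose m) * (1 - (A + B)) \<le> 0" by (simp add: mult_nonneg_nonpos)
    then show ?thesis by (metis A_plus_B of_nat_0_le_iff order_trans)
  qed
qed simp

lemma central_binomial_Suc:
  "((2 * k + 2) choose (k + 1)) * (k + 1) = 2 * (2 * k + 1) * ((2 * k) choose k)"
proof -
  have "((2 * k + 2) choose (k + 1)) * (k + 1) = (2 * k + 2) * ((2 * k + 1) choose k)"
    using Suc_times_binomial[of k "2 * k + 1"] by (simp del: binomial_Suc_Suc add: mult.commute)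
  then have "((2 * k + 2) choose (k + 1)) * (k + 1) * (k + 1) = (2 * k + 2) * ((2 * k + 1) choose k) * (k + 1)"
    by (simp only:)
  also have "\<dots> = (2 * k + 2) * (((2 * k + 1) choose (k + 1)) * (k + 1))"
    using binomial_symmetric[of k "2 * k + 1"] by (simp del: binomial_Suc_Suc)
  also have "\<dots> = (2 * k + 2) * ((2 * k + 1) * ((2 * k) choose k))"
    using Suc_times_binomial_eq[of "2 * k" k] by (simp del: binomial_Suc_Suc)
  also have "\<dots> = 2 * (2 * k + 1) * ((2 * k) choose k) * (k + 1)"
    by simp
  finally show ?thesis by (metis add_is_0 mult_right_cancel one_neq_zero)
qed

lemma central_binomial_sq_lower: "16 ^ k \<le> (4 * k + 1) * ((2 * k) choose k)\<^sup>2"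
proof (induction k)
  case (Suc k)
  define x where "x = (2 * k) choose k"
  define y where "y = (2 * k + 2) choose (k + 1)"
  have "16 ^ Suc k * (k + 1)\<^sup>2 \<le> 16 * ((4 * k + 1) * x\<^sup>2) * (k + 1)\<^sup>2"
    using Suc.IH by (simp add: x_def)
  also have "\<dots> = 4 * (4 * (k + 1)\<^sup>2 * (4 * k + 1)) * x\<^sup>2"
    by (simp add: algebra_simps)
  also have "\<dots> \<le> 4 * ((4 * k + 5) * (2 * k + 1)\<^sup>2) * x\<^sup>2"
    \<comment> \<open>the two cubics differ by exactly 1\<close>
    by (intro mult_right_mono mult_left_mono) (simp_all add: power2_eq_square algebra_simps)
  also have "\<dots> = (4 * k + 5) * (y * (k + 1))\<^sup>2"
    unfolding y_def central_binomial_Suc x_def by (simp add: power2_eq_square algebra_simps)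
  finally have "16 ^ Suc k * (k + 1)\<^sup>2 \<le> ((4 * k + 5) * y\<^sup>2) * (k + 1)\<^sup>2"
    by (simp only: power_mult_distrib mult.assoc)
  then have "16 ^ Suc k \<le> (4 * k + 5) * y\<^sup>2"
    by (rule mult_right_le_imp_le) simp
  then show ?case by (simp add: y_def add.commute del: binomial_Suc_Suc)
qed simp

lemma binomial_middle_sq_lower: "4 ^ n \<le> 4 * (n + 1) * (n choose (n - n div 2))\<^sup>2"
proof (cases "even n")
  case True
  then obtain k where n: "n = 2 * k" by blast
  have "4 ^ n = (16::nat) ^ k" by (simp add: n power_mult)
  also have "\<dots> \<le> (4 * k + 1) * ((2 * k) choose k)\<^sup>2" by (rule central_binomial_sq_lower)
  also have "\<dots> \<le> 4 * (n + 1) * ((2 * k) choose k)\<^sup>2"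
    by (intro mult_right_mono) (simp_all add: n)
  finally show ?thesis by (simp add: n)
next
  case False
  then obtain k where n: "n = 2 * k + 1" using oddE by blast
  have doubled: "(2 * k + 2) choose (k + 1) = 2 * (n choose (k + 1))"
    using binomial_symmetric[of k "2 * k + 1"] by (simp add: n)
  have "4 * 4 ^ n = (16::nat) ^ (k + 1)" by (simp add: n power_mult power_add)
  also have "\<dots> \<le> (4 * (k + 1) + 1) * ((2 * (k + 1)) choose (k + 1))\<^sup>2"
    by (rule central_binomial_sq_lower)
  also have "\<dots> = 4 * ((4 * k + 5) * (n choose (k + 1))\<^sup>2)"
    using doubled by (simp add: power_mult_distrib algebra_simps)
  also have "\<dots> \<le> 4 * (4 * (n + 1) * (n choose (n - n div 2))\<^sup>2)"
    by (simp add: n)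
  finally show ?thesis by simp
qed

lemma pmf_binomial_half: "pmf (binomial_pmf n (1/2)) k = real (n choose k) / 2 ^ n"
proof (cases "k \<le> n")
  case True
  then show ?thesis by (simp add: power_add[symmetric] power_one_over)
qed (simp add: not_le binomial_eq_0)

lemma pmf_binomial_half_middle_ge:
  "1 / (2 * sqrt (real n + 1)) \<le> pmf (binomial_pmf n (1/2)) (n - n div 2)"
proof -
  define c where "c = real (n choose (n - n div 2))"
  have "real (4 ^ n) \<le> real (4 * (n + 1) * (n choose (n - n div 2))\<^sup>2)"
    using binomial_middle_sq_lower by (simp only: of_nat_le_iff)
  moreover have "((2::real) ^ n)\<^sup>2 = 4 ^ n"
    by (simp add: power2_eq_square flip: power_mult_distrib)
  ultimately have "(2 ^ n)\<^sup>2 \<le> (2 * sqrt (real n + 1) * c)\<^sup>2"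
    by (simp add: c_def power_mult_distrib algebra_simps)
  then have "2 ^ n \<le> 2 * sqrt (real n + 1) * c"
    by (rule power2_le_imp_le) (simp add: c_def)
  then show ?thesis
    by (simp add: pmf_binomial_half c_def field_simps)
qed

lemma pmf_binomial_half_near_middle_ge:
  assumes "64 * j\<^sup>2 \<le> n + 1"
  shows "7 / (16 * sqrt (real n + 1)) \<le> pmf (binomial_pmf n (1/2)) (n - n div 2 + j)"
proof -
  define m where "m = n - n div 2"
  have "real (n choose m) * (7/8) \<le> real (n choose (m + j))"
  proof (cases "j = 0")
    case False
    then have "j * (j + 1) \<le> 2 * j\<^sup>2" "1 \<le> j\<^sup>2"
      by (simp_all add: power2_eq_square)
    moreover have "n \<le> 2 * m" unfolding m_def by simp
    ultimately have "8 * (j * (j + 1)) \<le> m" "1 \<le> m"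
      using assms by linarith+
    then have "real j * (real j + 1) / real m \<le> 1/8"
      by (simp add: field_simps flip: of_nat_mult of_nat_Suc)
    then have "real (n choose m) * (7/8) \<le> real (n choose m) * (1 - real j * (real j + 1) / real m)"
      by (intro mult_left_mono) auto
    also have "\<dots> \<le> real (n choose (m + j))"
      using \<open>1 \<le> m\<close> by (rule binomial_ge_near_middle) (simp add: m_def)
    finally show ?thesis .
  qed simp
  then have "7/8 * pmf (binomial_pmf n (1/2)) m \<le> pmf (binomial_pmf n (1/2)) (m + j)"
    by (simp add: pmf_binomial_half field_simps)
  moreover have "7 / (16 * sqrt (real n + 1)) \<le> 7/8 * pmf (binomial_pmf n (1/2)) m"
    using pmf_binomial_half_middle_ge[of n] by (simp add: m_def del: pmf_binomial)
  ultimately show ?thesis unfolding m_def by (rule order_trans[rotated])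
qed

lemma dlap_nonneg: "0 \<le> eps \<Longrightarrow> 0 \<le> dlap eps z"
  unfolding dlap_def by (intro mult_nonneg_nonneg divide_nonneg_nonneg) auto

lemma dlap_ge:
  assumes "0 < eps" "eps \<le> 1" "eps * \<bar>real_of_int z\<bar> \<le> 1"
  shows "eps / 12 \<le> dlap eps z"
proof -
  have "exp eps + 1 \<le> 4" using exp_mono[OF assms(2)] exp_le by linarith
  then have "eps * (exp eps + 1) \<le> eps * 4"
    using assms(1) by (intro mult_left_mono) auto
  also have "\<dots> \<le> (exp eps - 1) * 4"
    by (intro mult_right_mono) (use exp_ge_add_one_self[of eps] in linarith)+
  finally have normaliser: "eps / 4 \<le> (exp eps - 1) / (exp eps + 1)"
    by (simp add: field_simps add_pos_pos)
  have "1 / 3 \<le> exp (- 1 :: real)" using exp_le by (simp add: exp_minus field_simps)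
  also have "\<dots> \<le> exp (- eps * real_of_int \<bar>z\<bar>)" using assms(3) by simp
  finally have "eps / 4 * (1 / 3) \<le> (exp eps - 1) / (exp eps + 1) * exp (- eps * real_of_int \<bar>z\<bar>)"
    using normaliser assms(1) by (intro mult_mono) auto
  then show ?thesis unfolding dlap_def by simp
qed

lemma binlap_prob_ge_window_sum:
  assumes "0 \<le> eps"
  shows "(\<Sum>j\<le>J. pmf (binomial_pmf n (1/2)) (m + j) * dlap eps (- int j)) \<le> binlap_prob n eps (int m)"
proof -
  define f where "f k = pmf (binomial_pmf n (1/2)) k * dlap eps (int m - int k)" for k
  have f_nonneg: "0 \<le> f k" for k unfolding f_def using dlap_nonneg[OF assms] by simp
  have "(\<Sum>j\<le>J. pmf (binomial_pmf n (1/2)) (m + j) * dlap eps (- int j)) = sum f ((+) m ` {..J})"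
    by (simp add: sum.reindex f_def)
  also have "\<dots> \<le> sum f {..m + J + n}"
    using f_nonneg by (intro sum_mono2) auto
  also have "\<dots> = sum f {..n}"
    by (intro sum.mono_neutral_right) (auto simp: f_def binomial_eq_0)
  also have "\<dots> = binlap_prob n eps (int m)"
    by (simp add: binlap_prob_def f_def)
  finally show ?thesis .
qed

lemma binlap_prob_middle_ge_window:
  assumes "0 < eps" "eps \<le> 1" "64 * J\<^sup>2 \<le> n + 1" "eps * real J \<le> 1"
  shows "7 / 192 * ((real J + 1) * eps / sqrt (real n + 1)) \<le> binlap_prob n eps (int (n - n div 2))"
proof -
  have term_ge: "7 / (16 * sqrt (real n + 1)) * (eps / 12)
      \<le> pmf (binomial_pmf n (1/2)) (n - n div 2 + j) * dlap eps (- int j)" if "j \<le> J" for j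
  proof (intro mult_mono)
    have "64 * j\<^sup>2 \<le> n + 1" using power_mono[OF that, of 2] assms(3) by linarith
    then show "7 / (16 * sqrt (real n + 1)) \<le> pmf (binomial_pmf n (1/2)) (n - n div 2 + j)"
      by (rule pmf_binomial_half_near_middle_ge)
    have "eps * real j \<le> eps * real J" using that assms(1) by simp
    with assms(4) have "eps * real j \<le> 1" by linarith
    then show "eps / 12 \<le> dlap eps (- int j)" using dlap_ge[OF assms(1,2), of "- int j"] by simp
  qed (use assms(1) in simp_all)
  have "7 / 192 * ((real J + 1) * eps / sqrt (real n + 1))
      = (\<Sum>j\<le>J. 7 / (16 * sqrt (real n + 1)) * (eps / 12))"
    by simp
  also have "\<dots> \<le> (\<Sum>j\<le>J. pmf (binomial_pmf n (1/2)) (n - n div 2 + j) * dlap eps (- int j))"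
    using term_ge by (intro sum_mono) simp
  also have "\<dots> \<le> binlap_prob n eps (int (n - n div 2))"
    using assms(1) by (intro binlap_prob_ge_window_sum) simp
  finally show ?thesis .
qed

lemma inverse_sqrt_add_inverse_square_le:
  fixes x eps t :: real
  assumes "0 < x" "0 < eps" "min (sqrt x / 8) (1 / eps) \<le> t"
  shows "1 / (8 * sqrt (x + 1 / eps\<^sup>2)) \<le> t * eps / sqrt x"
proof -
  define S where "S = sqrt (x + 1 / eps\<^sup>2)"
  have "sqrt x \<le> S" unfolding S_def by simp
  have "1 / eps \<le> S"
    using real_sqrt_le_mono[of "1 / eps\<^sup>2" "x + 1 / eps\<^sup>2"] assms(1,2)
    by (simp add: S_def real_sqrt_divide)
  have "0 < sqrt x" using assms(1) by simp
  with \<open>sqrt x \<le> S\<close> have "0 < S" by linarith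
  consider "1 / eps \<le> t" | "sqrt x / 8 \<le> t" using assms(3) by linarith
  then show ?thesis
  proof cases
    case 1
    have "1 / (8 * S) \<le> 1 / sqrt x"
      using \<open>sqrt x \<le> S\<close> \<open>0 < sqrt x\<close> \<open>0 < S\<close> by (simp add: field_simps)
    also have "\<dots> \<le> t * eps / sqrt x"
      using 1 assms(1,2) by (intro divide_right_mono) (simp_all add: field_simps)
    finally show ?thesis by (simp add: S_def)
  next
    case 2
    have "1 / (8 * S) \<le> eps / 8"
      using \<open>1 / eps \<le> S\<close> \<open>0 < S\<close> assms(2) by (simp add: field_simps)
    also have "\<dots> \<le> t * eps / sqrt x"
      using 2 assms(2) \<open>0 < sqrt x\<close> by (simp add: field_simps)
    finally show ?thesis by (simp add: S_def)
  qed
qed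

lemma binlap_prob_middle_ge:
  assumes "1 \<le> d" "0 < eps" "eps \<le> 1"
  shows "7 / 1536 / sqrt (real d + 1 / eps\<^sup>2) \<le> binlap_prob (d - 1) eps \<lceil>real (d - 1) / 2\<rceil>"
proof -
  define n where "n = d - 1"
  define w where "w = min (sqrt (real d) / 8) (1 / eps)"
  define J where "J = nat \<lfloor>w\<rfloor>"
  have d: "real d = real n + 1" using assms(1) by (simp add: n_def)
  have "0 \<le> w" using assms(2) by (simp add: w_def)
  then have J: "real J \<le> w" "w \<le> real J + 1"
    unfolding J_def by linarith+
  then have "(8 * real J)\<^sup>2 \<le> (sqrt (real d))\<^sup>2" by (intro power_mono) (auto simp: w_def)
  then have "real (64 * J\<^sup>2) \<le> real (n + 1)" using d by (simp add: power_mult_distrib)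
  then have J_sq: "64 * J\<^sup>2 \<le> n + 1" by (simp only: of_nat_le_iff)
  have J_eps: "eps * real J \<le> 1" using J(1) assms(2) by (simp add: w_def field_simps)
  have "7 / 1536 / sqrt (real d + 1 / eps\<^sup>2) = 7 / 192 * (1 / (8 * sqrt (real d + 1 / eps\<^sup>2)))"
    by simp
  also have "\<dots> \<le> 7 / 192 * ((real J + 1) * eps / sqrt (real d))"
    using J(2) assms by (intro mult_left_mono inverse_sqrt_add_inverse_square_le) (auto simp: w_def)
  also have "\<dots> \<le> binlap_prob n eps (int (n - n div 2))"
    unfolding d using assms(2,3) J_sq J_eps by (rule binlap_prob_middle_ge_window)
  also have "int (n - n div 2) = \<lceil>real (d - 1) / 2\<rceil>"
    unfolding n_def by linarith
  finally show ?thesis by (simp add: n_def)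
qed

theorem lemma5p4:
  "\<exists>c0>0. \<exists>C>0. \<forall>(d::nat) (eps::real). d \<ge> 1 \<longrightarrow> 0 < eps \<longrightarrow> eps \<le> c0 \<longrightarrow>
     binlap_prob (d - 1) eps \<lceil>real (d - 1) / 2\<rceil> \<ge> C / sqrt (real d + 1 / eps\<^sup>2)"
  using binlap_prob_middle_ge by (intro exI[of _ 1] exI[of _ "7 / 1536"] conjI allI impI) auto

end
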